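(* Let $H \subset L$ be light-cone regular, let $h_0$ be a minimal element of $H$ with respect to $\le$, and let $H' = H \setminus \{h_0\}$. Then the initial boundaries satisfy $H'_0 = (H_0 \setminus \{h_0\}) \cup \{h_0 - v_N\}$.
   Context: Let $L$ be a finitely generated $\mathbb{Z}$-module and $v_1,\dots,v_N\in L$ distinct elements linearly independent over $\mathbb{Z}_{\ge 0}$ (i.e. $\sum_i a_i v_i=0$ with all $a_i\in\mathbb{Z}_{\ge0}$ forces all $a_i=0$). Let $S=\{\sum_i a_iv_i : a_i\in\mathbb{Z}_{\ge0}\}$ and define the partial order $h_1\le h_2$ iff $h_1-h_2\in S$. Assume $v_N$ is the minimum of $\{0,v_1,\dots,v_N\}$ with respect to $\le$. A nonempty subset $H\subset L$ is light-cone regular if for every $h\in H$ the set $\{h'\in H: h'\le h\}$ is finite and $\{h'\in L: h'\ge h\}\subset H$. The initial boundary of a light-cone regular $H$ is $H_0=\{h\in H:\ h+v_i\notin H\text{ for some }i\}$. (For minimal $h_0$, the set $H\setminus\{h_0\}$ is again light-cone regular, so $H'_0$ is defined.) *)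

theory Defs
  imports Main
begin

primrec nsmul :: "nat \<Rightarrow> 'a::ab_group_add \<Rightarrow> 'a" where
  "nsmul 0 x = 0"
| "nsmul (Suc n) x = x + nsmul n x"

inductive_set zspan :: "'a::ab_group_add set \<Rightarrow> 'a set" for G where
  zero: "0 \<in> zspan G"
| gen: "g \<in> G \<Longrightarrow> g \<in> zspan G"
| diff: "x \<in> zspan G \<Longrightarrow> y \<in> zspan G \<Longrightarrow> x - y \<in> zspan G"

definition fin_gen_Z_module :: "'a::ab_group_add itself \<Rightarrow> bool" where
  "fin_gen_Z_module _ \<longleftrightarrow> (\<exists>G::'a set. finite G \<and> zspan G = UNIV)"

definition nonneg_indep :: "(nat \<Rightarrow> 'a::ab_group_add) \<Rightarrow> nat \<Rightarrow> bool" where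
  "nonneg_indep v N \<longleftrightarrow>
     (\<forall>a::nat \<Rightarrow> nat. (\<Sum>i\<in>{1..N}. nsmul (a i) (v i)) = 0 \<longrightarrow> (\<forall>i\<in>{1..N}. a i = 0))"

definition cone :: "(nat \<Rightarrow> 'a::ab_group_add) \<Rightarrow> nat \<Rightarrow> 'a set" where
  "cone v N = {\<Sum>i\<in>{1..N}. nsmul (a i) (v i) | a. True}"

definition cone_le :: "(nat \<Rightarrow> 'a::ab_group_add) \<Rightarrow> nat \<Rightarrow> 'a \<Rightarrow> 'a \<Rightarrow> bool" where
  "cone_le v N h1 h2 \<longleftrightarrow> h1 - h2 \<in> cone v N"

definition light_cone_regular :: "(nat \<Rightarrow> 'a::ab_group_add) \<Rightarrow> nat \<Rightarrow> 'a set \<Rightarrow> bool" where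
  "light_cone_regular v N H \<longleftrightarrow> H \<noteq> {} \<and>
     (\<forall>h\<in>H. finite {h'\<in>H. cone_le v N h' h} \<and> {h'. cone_le v N h h'} \<subseteq> H)"

definition initial_boundary :: "(nat \<Rightarrow> 'a::ab_group_add) \<Rightarrow> nat \<Rightarrow> 'a set \<Rightarrow> 'a set" where
  "initial_boundary v N H = {h\<in>H. \<exists>i\<in>{1..N}. h + v i \<notin> H}"

end

theory Submission
  imports Defs
begin

text \<open>Removing \<open>h\<^sub>0\<close> from \<open>H\<close> can only add to the initial boundary the points
  \<open>h\<^sub>0 - v\<^sub>i\<close>, all of which lie in \<open>H\<close> by regularity. For \<open>i \<noteq> N\<close> the point
  \<open>h\<^sub>0 - v\<^sub>i\<close> was already in \<open>H\<^sub>0\<close>: otherwise \<open>h\<^sub>0 + (v\<^sub>N - v\<^sub>i)\<close> would be an element of \<open>H\<close>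
  strictly below \<open>h\<^sub>0\<close>, since \<open>v\<^sub>N\<close> is the minimum of the generators.\<close>

lemma sum_nsmul_indicator:
  fixes v :: "nat \<Rightarrow> 'a::ab_group_add"
  assumes "i \<in> {1..N}"
  shows "(\<Sum>j\<in>{1..N}. nsmul (if j = i then 1 else 0) (v j)) = v i"
proof -
  have "(\<Sum>j\<in>{1..N}. nsmul (if j = i then 1 else 0) (v j)) = (\<Sum>j\<in>{1..N}. if j = i then v j else 0)"
    by (rule sum.cong) auto
  also have "\<dots> = v i"
    using assms by simp
  finally show ?thesis .
qed

lemma generator_in_cone:
  fixes v :: "nat \<Rightarrow> 'a::ab_group_add"
  assumes "i \<in> {1..N}"
  shows "v i \<in> cone v N"
  unfolding cone_def mem_Collect_eq
  using sum_nsmul_indicator[OF assms, of v, symmetric] by (intro exI[where x="\<lambda>j. if j = i then 1 else 0"]) simp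

lemma nonneg_indep_generator_nonzero:
  fixes v :: "nat \<Rightarrow> 'a::ab_group_add"
  assumes "nonneg_indep v N" and "i \<in> {1..N}"
  shows "v i \<noteq> 0"
proof
  assume "v i = 0"
  then have "(\<Sum>j\<in>{1..N}. nsmul (if j = i then 1 else 0) (v j)) = 0"
    using sum_nsmul_indicator[OF assms(2), of v] by simp
  then have "(if i = i then 1 else 0 :: nat) = 0"
    using assms(1)[unfolded nonneg_indep_def, rule_format, of "\<lambda>j. if j = i then 1 else 0" i]
      assms(2) by blast
  then show False
    by simp
qed

lemma light_cone_regular_diff_cone:
  assumes "light_cone_regular v N H" and "h \<in> H" and "c \<in> cone v N"
  shows "h - c \<in> H"
proof -
  have "{h'. cone_le v N h h'} \<subseteq> H"
    using assms(1,2) unfolding light_cone_regular_def by blast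
  moreover have "cone_le v N h (h - c)"
    using assms(3) unfolding cone_le_def by simp
  ultimately show ?thesis
    by blast
qed

lemma minimal_add_cone:
  assumes "\<forall>h\<in>H. cone_le v N h h0 \<longrightarrow> h = h0" and "h0 + c \<in> H" and "c \<in> cone v N"
  shows "c = 0"
  using assms unfolding cone_le_def by force

lemma initial_boundary_Diff_singleton:
  "initial_boundary v N (H - {h0}) =
     (initial_boundary v N H - {h0}) \<union> {h \<in> H - {h0}. \<exists>i\<in>{1..N}. h + v i = h0}"
  unfolding initial_boundary_def by blast

lemma light_cone_regular_predecessors:
  fixes v :: "nat \<Rightarrow> 'a::ab_group_add"
  assumes "light_cone_regular v N H" and "nonneg_indep v N" and "h0 \<in> H"
  shows "{h \<in> H - {h0}. \<exists>i\<in>{1..N}. h + v i = h0} = (\<lambda>i. h0 - v i) ` {1..N}"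
proof -
  have "h0 - v i \<in> H - {h0}" if "i \<in> {1..N}" for i
    using light_cone_regular_diff_cone[OF assms(1,3) generator_in_cone[OF that]]
      nonneg_indep_generator_nonzero[OF assms(2) that] by simp
  then show ?thesis
    by (force simp: algebra_simps)
qed

lemma minimal_diff_generator_in_initial_boundary:
  assumes reg: "light_cone_regular v N H"
    and h0: "h0 \<in> H" "\<forall>h\<in>H. cone_le v N h h0 \<longrightarrow> h = h0"
    and ij: "i \<in> {1..N}" "j \<in> {1..N}" "cone_le v N (v j) (v i)" "v j \<noteq> v i"
  shows "h0 - v i \<in> initial_boundary v N H"
proof -
  have "v j - v i \<noteq> 0"
    using ij(4) by simp
  then have "h0 + (v j - v i) \<notin> H"
    using minimal_add_cone[OF h0(2)] ij(3) unfolding cone_le_def by blast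
  then have "(h0 - v i) + v j \<notin> H"
    by (simp add: algebra_simps)
  moreover have "h0 - v i \<in> H"
    using light_cone_regular_diff_cone[OF reg h0(1) generator_in_cone[OF ij(1)]] .
  ultimately show ?thesis
    unfolding initial_boundary_def using ij(2) by blast
qed

theorem lemma3p11:
  fixes v :: "nat \<Rightarrow> 'a::ab_group_add" and N :: nat and H :: "'a set" and h0 :: 'a
  assumes fg: "fin_gen_Z_module TYPE('a)"
    and N: "N \<ge> 1"
    and dist: "inj_on v {1..N}"
    and indep: "nonneg_indep v N"
    and vN_min: "\<forall>x\<in>insert 0 (v ` {1..N}). cone_le v N (v N) x"
    and reg: "light_cone_regular v N H"
    and h0: "h0 \<in> H" "\<forall>h\<in>H. cone_le v N h h0 \<longrightarrow> h = h0"
  shows "initial_boundary v N (H - {h0}) =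
           (initial_boundary v N H - {h0}) \<union> {h0 - v N}"
proof -
  have "N \<in> {1..N}"
    using N by simp
  have "(\<lambda>i. h0 - v i) ` {1..N} \<subseteq> (initial_boundary v N H - {h0}) \<union> {h0 - v N}"
  proof (rule image_subsetI)
    fix i
    assume i: "i \<in> {1..N}"
    show "h0 - v i \<in> (initial_boundary v N H - {h0}) \<union> {h0 - v N}"
    proof (cases "i = N")
      case False
      then have "v N \<noteq> v i"
        using inj_on_contraD[OF dist _ \<open>N \<in> {1..N}\<close> i] by metis
      then show ?thesis
        using minimal_diff_generator_in_initial_boundary[OF reg h0 i \<open>N \<in> {1..N}\<close>]
          vN_min i nonneg_indep_generator_nonzero[OF indep i] by simp
    qed simp
  qed
  moreover have "h0 - v N \<in> (\<lambda>i. h0 - v i) ` {1..N}"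
    using \<open>N \<in> {1..N}\<close> by simp
  ultimately show ?thesis
    unfolding initial_boundary_Diff_singleton light_cone_regular_predecessors[OF reg indep h0(1)]
    by auto
qed

end
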